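(* Let $X$ be a graph with bounded geometry and let $\phi:X\to G$ be an injective $(a,b)$-rough isometry to a Cayley graph $(G,S)$ of a group of polynomial volume growth. Then there exist constants $0<C_1<1$, $C_2>0$ and $R_1$ such that for all $y\in G$ and $p\in X$ with $d^S(\phi(p),y)\leq b$, and all $R\geq R_1$, $$|B_p^X(R)|\geq C_2\,|B_y^G(C_1R)|.$$
   Context: Graphs are connected, locally finite, without self-loops or multiple edges; $d^X$ is the path-length metric on $X$; bounded geometry means all vertex degrees are at most some $\Delta$. For a group $G$ with finite symmetric generating set $S$, the Cayley graph has $x\sim y$ iff $x=ys$ for some $s\in S$, with word metric $d^S$. $G$ has polynomial volume growth if $|B^G_e(n)|\leq Cn^A$ for some $C,A>0$ and all $n\geq1$. $B_p^X(R)=\{x\in X:d^X(x,p)\leq R\}$, $B_y^G(R)=\{z\in G:d^S(z,y)\leq R\}$, and $|\cdot|$ denotes cardinality. An $(a,b)$-rough isometry ($a\geq 1,b\geq0$) is a map $\phi$ with $a^{-1}d^X(x,y)-b\leq d^S(\phi(x),\phi(y))\leq a\,d^X(x,y)+b$ for all $x,y\in X$ and $d^S(z,\phi(X))\leq b$ for all $z\in G$. *)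

theory Defs
  imports Complex_Main "HOL-Algebra.Generated_Groups"
begin

definition walk_of_length :: "('v \<Rightarrow> 'v \<Rightarrow> bool) \<Rightarrow> 'v \<Rightarrow> 'v \<Rightarrow> nat \<Rightarrow> bool" where
  "walk_of_length E x y n \<longleftrightarrow>
     (\<exists>f :: nat \<Rightarrow> 'v. f 0 = x \<and> f n = y \<and> (\<forall>i<n. E (f i) (f (Suc i))))"

definition graph_dist :: "('v \<Rightarrow> 'v \<Rightarrow> bool) \<Rightarrow> 'v \<Rightarrow> 'v \<Rightarrow> nat" where
  "graph_dist E x y = (LEAST n. walk_of_length E x y n)"

definition graph :: "('v \<Rightarrow> 'v \<Rightarrow> bool) \<Rightarrow> bool" where
  "graph E \<longleftrightarrow> (\<forall>x y. E x y \<longrightarrow> E y x) \<and> (\<forall>x. \<not> E x x)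
     \<and> (\<forall>x. finite {y. E x y}) \<and> (\<forall>x y. \<exists>n. walk_of_length E x y n)"

definition bounded_geometry :: "('v \<Rightarrow> 'v \<Rightarrow> bool) \<Rightarrow> bool" where
  "bounded_geometry E \<longleftrightarrow> (\<exists>\<Delta>::nat. \<forall>x. card {y. E x y} \<le> \<Delta>)"

definition graph_ball :: "('v \<Rightarrow> 'v \<Rightarrow> bool) \<Rightarrow> 'v \<Rightarrow> real \<Rightarrow> 'v set" where
  "graph_ball E p R = {x. real (graph_dist E x p) \<le> R}"

definition fin_sym_gen_set :: "('g, 'b) monoid_scheme \<Rightarrow> 'g set \<Rightarrow> bool" where
  "fin_sym_gen_set G S \<longleftrightarrow> S \<subseteq> carrier G \<and> finite S \<and> (\<forall>s\<in>S. inv\<^bsub>G\<^esub> s \<in> S)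
     \<and> generate G S = carrier G"

definition cayley_adj :: "('g, 'b) monoid_scheme \<Rightarrow> 'g set \<Rightarrow> 'g \<Rightarrow> 'g \<Rightarrow> bool" where
  "cayley_adj G S x y \<longleftrightarrow> x \<in> carrier G \<and> y \<in> carrier G \<and> (\<exists>s\<in>S. x = y \<otimes>\<^bsub>G\<^esub> s)"

definition word_dist :: "('g, 'b) monoid_scheme \<Rightarrow> 'g set \<Rightarrow> 'g \<Rightarrow> 'g \<Rightarrow> nat" where
  "word_dist G S = graph_dist (cayley_adj G S)"

definition group_ball :: "('g, 'b) monoid_scheme \<Rightarrow> 'g set \<Rightarrow> 'g \<Rightarrow> real \<Rightarrow> 'g set" where
  "group_ball G S y R = {z \<in> carrier G. real (word_dist G S z y) \<le> R}"

definition polynomial_growth :: "('g, 'b) monoid_scheme \<Rightarrow> 'g set \<Rightarrow> bool" where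
  "polynomial_growth G S \<longleftrightarrow> (\<exists>C A::real. C > 0 \<and> A > 0 \<and>
     (\<forall>n::nat. n \<ge> 1 \<longrightarrow> real (card (group_ball G S \<one>\<^bsub>G\<^esub> (real n))) \<le> C * real n powr A))"

definition rough_isometry ::
  "('v \<Rightarrow> 'v \<Rightarrow> bool) \<Rightarrow> ('g, 'b) monoid_scheme \<Rightarrow> 'g set \<Rightarrow> real \<Rightarrow> real \<Rightarrow> ('v \<Rightarrow> 'g) \<Rightarrow> bool" where
  "rough_isometry E G S a b \<phi> \<longleftrightarrow> a \<ge> 1 \<and> b \<ge> 0 \<and> (\<forall>x. \<phi> x \<in> carrier G) \<and>
     (\<forall>x y. real (graph_dist E x y) / a - b \<le> real (word_dist G S (\<phi> x) (\<phi> y)) \<and>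
            real (word_dist G S (\<phi> x) (\<phi> y)) \<le> a * real (graph_dist E x y) + b) \<and>
     (\<forall>z\<in>carrier G. \<exists>x. real (word_dist G S z (\<phi> x)) \<le> b)"

end

theory Submission
  imports Defs
begin

text \<open>Pick for every group element z a vertex g z with d(z, \<phi>(g z)) \<le> b. The group ball of
  radius R/(2a) around y is mapped by g into the graph ball of radius R around p once R \<ge> 6ab,
  and it is covered by the b-balls around the points \<phi>(g z); these have at most
  K = \<Sum>k\<le>\<lfloor>b\<rfloor>. |S|^k elements each, so the group ball has at most K times as many
  elements as the graph ball.\<close>

lemma walk_of_length_edge: "E x y \<Longrightarrow> walk_of_length E x y 1"
  unfolding walk_of_length_def by (intro exI[of _ "\<lambda>i. if i = 0 then x else y"]) auto

lemma walk_of_length_rev: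
  assumes sym: "\<And>x y. E x y \<Longrightarrow> E y x" and w: "walk_of_length E x y n"
  shows "walk_of_length E y x n"
proof -
  obtain f where f: "f 0 = x" "f n = y" "\<forall>i<n. E (f i) (f (Suc i))"
    using w unfolding walk_of_length_def by blast
  have "E (f (n - i)) (f (n - Suc i))" if "i < n" for i
  proof -
    have "E (f (n - Suc i)) (f (Suc (n - Suc i)))" using f(3) that by simp
    moreover have "Suc (n - Suc i) = n - i" using that by simp
    ultimately show ?thesis using sym by metis
  qed
  then show ?thesis unfolding walk_of_length_def using f
    by (intro exI[of _ "\<lambda>i. f (n - i)"]) auto
qed

lemma walk_of_length_trans:
  assumes "walk_of_length E x y m" "walk_of_length E y z n"
  shows "walk_of_length E x z (m + n)"
proof -
  obtain f where f: "f 0 = x" "f m = y" "\<forall>i<m. E (f i) (f (Suc i))"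
    using assms(1) unfolding walk_of_length_def by blast
  obtain g where g: "g 0 = y" "g n = z" "\<forall>i<n. E (g i) (g (Suc i))"
    using assms(2) unfolding walk_of_length_def by blast
  define h where "h i = (if i \<le> m then f i else g (i - m))" for i
  have h_tail: "h i = g (i - m)" if "i \<ge> m" for i
    using that f(2) g(1) by (cases "i = m") (auto simp: h_def)
  have "E (h i) (h (Suc i))" if i: "i < m + n" for i
  proof (cases "i < m")
    case True
    then show ?thesis using f(3) by (simp add: h_def)
  next
    case False
    then have "h i = g (i - m)" "h (Suc i) = g (Suc (i - m))"
      using h_tail by (auto simp: Suc_diff_le)
    then show ?thesis using g(3) i False by simp
  qed
  moreover have "h 0 = x" "h (m + n) = z" using f g h_tail[of "m + n"] by (auto simp: h_def)
  ultimately show ?thesis unfolding walk_of_length_def by blast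
qed

lemma graph_dist_le: "walk_of_length E x y n \<Longrightarrow> graph_dist E x y \<le> n"
  unfolding graph_dist_def by (rule Least_le)

lemma walk_of_length_graph_dist:
  "walk_of_length E x y n \<Longrightarrow> walk_of_length E x y (graph_dist E x y)"
  unfolding graph_dist_def by (rule LeastI)

lemma graph_dist_sym:
  assumes sym: "\<And>x y. E x y \<Longrightarrow> E y x" and w: "walk_of_length E x y n"
  shows "graph_dist E x y = graph_dist E y x"
proof -
  have "walk_of_length E y x (graph_dist E x y)"
    using walk_of_length_rev[OF sym walk_of_length_graph_dist[OF w]] .
  moreover have "walk_of_length E x y (graph_dist E y x)"
    using walk_of_length_rev[OF sym walk_of_length_graph_dist[OF walk_of_length_rev[OF sym w]]] .
  ultimately show ?thesis using graph_dist_le le_antisym by metis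
qed

lemma graph_dist_triangle:
  assumes "walk_of_length E x y m" "walk_of_length E y z n"
  shows "graph_dist E x z \<le> graph_dist E x y + graph_dist E y z"
  using graph_dist_le[OF walk_of_length_trans[OF walk_of_length_graph_dist[OF assms(1)]
        walk_of_length_graph_dist[OF assms(2)]]] .

lemma walks_to_finite_card_le:
  assumes fin: "\<And>w. finite {x. E x w}" and deg: "\<And>w. card {x. E x w} \<le> D"
  shows "finite {x. walk_of_length E x c n} \<and> card {x. walk_of_length E x c n} \<le> D ^ n"
proof (induction n)
  case 0
  have "{x. walk_of_length E x c 0} = {c}" unfolding walk_of_length_def by auto
  then show ?case by simp
next
  case (Suc n)
  let ?W = "{x. walk_of_length E x c n}"
  let ?U = "\<Union>w\<in>?W. {x. E x w}"
  have sub: "{x. walk_of_length E x c (Suc n)} \<subseteq> ?U"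
  proof
    fix x assume "x \<in> {x. walk_of_length E x c (Suc n)}"
    then obtain f where f: "f 0 = x" "f (Suc n) = c" "\<forall>i<Suc n. E (f i) (f (Suc i))"
      unfolding walk_of_length_def by blast
    have "walk_of_length E (f 1) c n" unfolding walk_of_length_def
      using f by (intro exI[of _ "\<lambda>i. f (Suc i)"]) auto
    moreover have "E x (f 1)" using f by auto
    ultimately show "x \<in> ?U" by auto
  qed
  have finU: "finite ?U" using Suc fin by auto
  have "card ?U \<le> (\<Sum>w\<in>?W. card {x. E x w})" by (rule card_UN_le) (use Suc in auto)
  also have "\<dots> \<le> (\<Sum>w\<in>?W. D)" by (rule sum_mono) (rule deg)
  also have "\<dots> \<le> D ^ Suc n" using Suc by (simp add: mult.commute)
  finally show ?case using card_mono[OF finU sub] finite_subset[OF sub finU] by simp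
qed

lemma dist_ball_finite_card_le:
  assumes fin: "\<And>w. finite {x. E x w}" and deg: "\<And>w. card {x. E x w} \<le> D"
    and conn: "\<And>x. x \<in> A \<Longrightarrow> \<exists>n. walk_of_length E x c n"
  shows "finite {x\<in>A. real (graph_dist E x c) \<le> r} \<and>
         card {x\<in>A. real (graph_dist E x c) \<le> r} \<le> (\<Sum>k\<le>nat \<lfloor>r\<rfloor>. D ^ k)"
proof -
  let ?U = "\<Union>k\<le>nat \<lfloor>r\<rfloor>. {x. walk_of_length E x c k}"
  have sub: "{x\<in>A. real (graph_dist E x c) \<le> r} \<subseteq> ?U"
  proof
    fix x assume x: "x \<in> {x\<in>A. real (graph_dist E x c) \<le> r}"
    then obtain n where "walk_of_length E x c n" using conn by auto
    then have "walk_of_length E x c (graph_dist E x c)" by (rule walk_of_length_graph_dist)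
    moreover have "graph_dist E x c \<le> nat \<lfloor>r\<rfloor>" using x by (simp add: le_nat_floor)
    ultimately show "x \<in> ?U" by auto
  qed
  have finU: "finite ?U" using walks_to_finite_card_le[OF fin deg] by auto
  have "card ?U \<le> (\<Sum>k\<le>nat \<lfloor>r\<rfloor>. card {x. walk_of_length E x c k})" by (rule card_UN_le) simp
  also have "\<dots> \<le> (\<Sum>k\<le>nat \<lfloor>r\<rfloor>. D ^ k)"
    by (rule sum_mono) (use walks_to_finite_card_le[OF fin deg] in auto)
  finally show ?thesis using card_mono[OF finU sub] finite_subset[OF sub finU] by simp
qed

lemma finite_graph_ball:
  assumes "graph E" and "bounded_geometry E"
  shows "finite (graph_ball E p R)"
proof -
  have in_out: "{x. E x w} = {x. E w x}" for w using assms(1) unfolding graph_def by auto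
  obtain D where "\<And>x. card {y. E x y} \<le> D"
    using assms(2) unfolding bounded_geometry_def by auto
  then have "card {x. E x w} \<le> D" for w by (simp only: in_out)
  moreover have "finite {x. E x w}" for w using assms(1) unfolding graph_def in_out by blast
  moreover have "\<exists>n. walk_of_length E x p n" for x using assms(1) unfolding graph_def by blast
  then have "finite {x\<in>UNIV. real (graph_dist E x p) \<le> R}"
    using dist_ball_finite_card_le[of E D UNIV p R] calculation by blast
  then show ?thesis unfolding graph_ball_def by simp
qed

lemma card_le_card_mult_of_cover:
  assumes "finite F" and "B \<subseteq> (\<Union>x\<in>F. N x)" and "\<And>x. x \<in> F \<Longrightarrow> finite (N x)"
    and "\<And>x. x \<in> F \<Longrightarrow> card (N x) \<le> K"
  shows "card B \<le> card F * K"
proof -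
  have "card B \<le> card (\<Union>x\<in>F. N x)" using assms(1-3) by (intro card_mono) auto
  also have "\<dots> \<le> (\<Sum>x\<in>F. card (N x))" using assms(1) by (rule card_UN_le)
  also have "\<dots> \<le> card F * K" using sum_mono[of F _ "\<lambda>_. K"] assms(4) by simp
  finally show ?thesis .
qed

locale cayley_graph = group G for G (structure) +
  fixes S
  assumes fin_sym_gen: "fin_sym_gen_set G S"
begin

lemma gens_closed: "S \<subseteq> carrier G" and finite_gens: "finite S"
  and inv_gens: "s \<in> S \<Longrightarrow> inv s \<in> S" and generate_gens: "generate G S = carrier G"
  using fin_sym_gen unfolding fin_sym_gen_set_def by auto

lemma cayley_adj_sym: "cayley_adj G S x y \<Longrightarrow> cayley_adj G S y x"
proof -
  assume "cayley_adj G S x y"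
  then obtain s where s: "s \<in> S" "x = y \<otimes> s" "x \<in> carrier G" "y \<in> carrier G"
    unfolding cayley_adj_def by blast
  then have "y = x \<otimes> inv s" using gens_closed by (auto simp: m_assoc)
  then show "cayley_adj G S y x" using s inv_gens unfolding cayley_adj_def by blast
qed

lemma cayley_in_neighbours: "finite {x. cayley_adj G S x w}" "card {x. cayley_adj G S x w} \<le> card S"
proof -
  have sub: "{x. cayley_adj G S x w} \<subseteq> (\<lambda>s. w \<otimes> s) ` S" unfolding cayley_adj_def by auto
  then show "finite {x. cayley_adj G S x w}" using finite_gens finite_subset by blast
  show "card {x. cayley_adj G S x w} \<le> card S"
    using sub finite_gens card_image_le card_mono by (metis finite_imageI le_trans)
qed

text \<open>Induction over generate G S, for all base points at once: c \<otimes> g is joined to c.\<close>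

lemma cayley_connected:
  assumes x: "x \<in> carrier G" and c: "c \<in> carrier G"
  shows "\<exists>n. walk_of_length (cayley_adj G S) x c n"
proof -
  have step: "walk_of_length (cayley_adj G S) (c \<otimes> s) c 1" if "s \<in> S" "c \<in> carrier G" for s c
    using that gens_closed by (intro walk_of_length_edge) (auto simp: cayley_adj_def)
  have "\<forall>c\<in>carrier G. \<exists>n. walk_of_length (cayley_adj G S) (c \<otimes> g) c n"
    if "g \<in> generate G S" for g
    using that
  proof (induction g rule: generate.induct)
    case one
    then show ?case by (auto intro!: exI[of _ 0] simp: walk_of_length_def)
  next
    case (incl h)
    then show ?case using step by blast
  next
    case (inv h)
    then show ?case using step inv_gens by blast
  next
    case (eng h1 h2)
    have h: "h1 \<in> carrier G" "h2 \<in> carrier G" using eng.hyps generate_gens by auto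
    show ?case
    proof
      fix c assume c: "c \<in> carrier G"
      obtain m where "walk_of_length (cayley_adj G S) (c \<otimes> h1 \<otimes> h2) (c \<otimes> h1) m"
        using eng.IH(2) c h by blast
      moreover obtain n where "walk_of_length (cayley_adj G S) (c \<otimes> h1) c n"
        using eng.IH(1) c by blast
      ultimately show "\<exists>n. walk_of_length (cayley_adj G S) (c \<otimes> (h1 \<otimes> h2)) c n"
        using walk_of_length_trans c h by (metis m_assoc)
    qed
  qed
  moreover have "inv c \<otimes> x \<in> generate G S" "c \<otimes> (inv c \<otimes> x) = x"
    using generate_gens x c by (auto simp: m_assoc[symmetric])
  ultimately show ?thesis using c by metis
qed

lemma word_dist_sym:
  "x \<in> carrier G \<Longrightarrow> z \<in> carrier G \<Longrightarrow> word_dist G S x z = word_dist G S z x"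
  unfolding word_dist_def using graph_dist_sym cayley_adj_sym cayley_connected by metis

lemma word_dist_triangle:
  "x \<in> carrier G \<Longrightarrow> u \<in> carrier G \<Longrightarrow> z \<in> carrier G \<Longrightarrow>
    word_dist G S x z \<le> word_dist G S x u + word_dist G S u z"
  unfolding word_dist_def using graph_dist_triangle cayley_connected by metis

lemma group_ball_finite_card_le:
  assumes "c \<in> carrier G"
  shows "finite (group_ball G S c r)" "card (group_ball G S c r) \<le> (\<Sum>k\<le>nat \<lfloor>r\<rfloor>. card S ^ k)"
  using dist_ball_finite_card_le[of "cayley_adj G S" "card S" "carrier G" c r]
    cayley_in_neighbours cayley_connected[OF _ assms]
  unfolding group_ball_def word_dist_def by auto

end

lemma rough_isometry_dist_le:
  assumes "rough_isometry E G S a b \<phi>"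
  shows "real (graph_dist E x y) \<le> a * (real (word_dist G S (\<phi> x) (\<phi> y)) + b)"
proof -
  have "a \<ge> 1" "real (graph_dist E x y) / a - b \<le> real (word_dist G S (\<phi> x) (\<phi> y))"
    using assms unfolding rough_isometry_def by auto
  then show ?thesis by (simp add: field_simps)
qed

lemma (in cayley_graph) rough_isometry_maps_ball_into_ball:
  assumes ri: "rough_isometry E G S a b \<phi>"
    and y: "y \<in> carrier G" and py: "real (word_dist G S (\<phi> p) y) \<le> b" and R: "R \<ge> 6 * a * b"
    and z: "z \<in> group_ball G S y (R / (2 * a))" and zx: "real (word_dist G S z (\<phi> x)) \<le> b"
  shows "x \<in> graph_ball E p R"
proof -
  have a: "a \<ge> 1" and \<phi>: "\<And>v. \<phi> v \<in> carrier G" using ri unfolding rough_isometry_def by auto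
  have zc: "z \<in> carrier G" and zy: "real (word_dist G S z y) \<le> R / (2 * a)"
    using z unfolding group_ball_def by auto
  have "word_dist G S (\<phi> x) (\<phi> p) \<le> word_dist G S (\<phi> x) z + word_dist G S z (\<phi> p)"
    using word_dist_triangle \<phi> zc by blast
  also have "\<dots> \<le> word_dist G S z (\<phi> x) + (word_dist G S z y + word_dist G S (\<phi> p) y)"
    using word_dist_triangle[OF zc y \<phi>] word_dist_sym \<phi> zc y by simp
  finally have "real (word_dist G S (\<phi> x) (\<phi> p)) \<le> R / (2 * a) + 2 * b"
    using zx zy py by linarith
  then have "real (word_dist G S (\<phi> x) (\<phi> p)) + b \<le> R / (2 * a) + 3 * b" by simp
  then have "a * (real (word_dist G S (\<phi> x) (\<phi> p)) + b) \<le> a * (R / (2 * a) + 3 * b)"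
    using a by (intro mult_left_mono) simp_all
  with rough_isometry_dist_le[OF ri, of x p]
  have "real (graph_dist E x p) \<le> a * (R / (2 * a) + 3 * b)" by linarith
  also have "\<dots> = R / 2 + 3 * a * b" using a by (simp add: field_simps)
  also have "\<dots> \<le> R" using R by linarith
  finally show ?thesis unfolding graph_ball_def by simp
qed

lemma (in cayley_graph) card_group_ball_le_card_graph_ball:
  assumes "graph E" and "bounded_geometry E" and ri: "rough_isometry E G S a b \<phi>"
    and y: "y \<in> carrier G" and "real (word_dist G S (\<phi> p) y) \<le> b" and "R \<ge> 6 * a * b"
  shows "card (group_ball G S y (R / (2 * a)))
    \<le> card (graph_ball E p R) * (\<Sum>k\<le>nat \<lfloor>b\<rfloor>. card S ^ k)"
proof -
  let ?B = "group_ball G S y (R / (2 * a))"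
  have \<phi>: "\<And>x. \<phi> x \<in> carrier G"
    and "\<And>z. z \<in> carrier G \<Longrightarrow> \<exists>x. real (word_dist G S z (\<phi> x)) \<le> b"
    using ri unfolding rough_isometry_def by auto
  then obtain g where g: "\<And>z. z \<in> carrier G \<Longrightarrow> real (word_dist G S z (\<phi> (g z))) \<le> b"
    by metis
  have "g ` ?B \<subseteq> graph_ball E p R"
    using rough_isometry_maps_ball_into_ball[OF ri y] g assms(5,6) unfolding group_ball_def by blast
  moreover have "?B \<subseteq> (\<Union>x\<in>g ` ?B. group_ball G S (\<phi> x) b)"
    using g word_dist_sym \<phi> unfolding group_ball_def by fastforce
  then have "card ?B \<le> card (g ` ?B) * (\<Sum>k\<le>nat \<lfloor>b\<rfloor>. card S ^ k)"
    using group_ball_finite_card_le[OF y] group_ball_finite_card_le[OF \<phi>]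
    by (intro card_le_card_mult_of_cover) auto
  ultimately show ?thesis
    using card_mono[OF finite_graph_ball[OF assms(1,2)]] by (meson le_trans mult_le_mono1)
qed

theorem lemma4p3:
  fixes E :: "'v \<Rightarrow> 'v \<Rightarrow> bool"
    and G :: "('g, 'b) monoid_scheme" and S :: "'g set"
    and \<phi> :: "'v \<Rightarrow> 'g" and a b :: real
  assumes "graph E" and "bounded_geometry E"
    and "group G" and "fin_sym_gen_set G S" and "polynomial_growth G S"
    and "rough_isometry E G S a b \<phi>" and "inj \<phi>"
  shows "\<exists>C1 C2 R1::real. 0 < C1 \<and> C1 < 1 \<and> C2 > 0 \<and>
    (\<forall>y\<in>carrier G. \<forall>p. real (word_dist G S (\<phi> p) y) \<le> b \<longrightarrow>
       (\<forall>R\<ge>R1. real (card (graph_ball E p R)) \<ge> C2 * real (card (group_ball G S y (C1 * R)))))"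
proof -
  interpret cayley_graph G S by (intro cayley_graph.intro cayley_graph_axioms.intro assms(3,4))
  define K where "K = (\<Sum>k\<le>nat \<lfloor>b\<rfloor>. card S ^ k)"
  have K: "K \<ge> 1"
    unfolding K_def using member_le_sum[of 0 "{..nat \<lfloor>b\<rfloor>}" "\<lambda>k. card S ^ k"] by auto
  have "real (card (group_ball G S y (R / (2 * a)))) \<le> real (card (graph_ball E p R)) * real K"
    if "y \<in> carrier G" "real (word_dist G S (\<phi> p) y) \<le> b" "R \<ge> 6 * a * b" for y p R
    using card_group_ball_le_card_graph_ball[OF assms(1,2,6) that] unfolding K_def
    by (metis of_nat_le_iff of_nat_mult)
  moreover have "a \<ge> 1" using assms(6) unfolding rough_isometry_def by simp
  ultimately show ?thesis using K
    by (intro exI[of _ "1 / (2 * a)"] exI[of _ "1 / real K"] exI[of _ "6 * a * b"])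
       (auto simp: field_simps)
qed

end
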